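(* Let $\mathcal{M}$ be a deterministic MDP with $|\mathcal{S}\times\mathcal{A}|<\infty$, and let $\mathcal{D}$ be an offline dataset of transitions such that $N(s,a,\mathcal{T}(s,a))\ge1$ for every $(s,a)\in\mathcal{S}\times\mathcal{A}$. Then DiSPOs trained on $\mathcal{D}$ are guaranteed to identify an optimal policy (for any reward $r(s)=w_r^\top\phi(s)$ linear in the features).
   Context: $\mathcal{M}$ has state space $\mathcal{S}$, action space $\mathcal{A}$, deterministic transition $\mathcal{T}:\mathcal{S}\times\mathcal{A}\to\mathcal{S}$, discount $\gamma\in(0,1)$, and reward $r(s)=w_r^\top\phi(s)$ for a feature map $\phi:\mathcal{S}\to\mathbb{R}^d$. $N(s,a,s')$ denotes the number of occurrences of the transition $(s,a,s')$ in the dataset $\mathcal{D}$. A DiSPO consists of (1) an outcome model $p(\psi\mid s)$, the distribution of successor features $\psi=\sum_{t\ge1}\gamma^{t-1}\phi(s_t)$ over trajectories starting at $s_1=s$ that are covered by the dataset (learned by the fixed point of the distributional Bellman update: $p(\cdot\mid s)$ maximizes the likelihood of $\phi(s)+\gamma\psi_{s'}$ with $(s,a,s')\in\mathcal{D}$, $\psi_{s'}\sim p(\cdot\mid s')$), and (2) a readout policy $\pi(a\mid s,\psi)$ which outputs an action $a$ at $s$ whose dataset transition $(s,a,s')$ realizes the outcome $\psi=\phi(s)+\gamma\psi_{s'}$ with $\psi_{s'}$ in the support of $p(\cdot\mid s')$. The DiSPO policy at state $s$ selects $\psi^*\in\arg\max_\psi w_r^\top\psi$ subject to $p(\psi\mid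 s)>0$ and takes the action $a\sim\pi(a\mid s,\psi^* )$. *)

theory Defs
  imports "HOL-Analysis.Analysis"
begin

text \<open>Deterministic MDP with transition T :: 's => 'a => 's, feature map
phi :: 's => real^'d, discount gamma, and dataset counts N s a s'.
States are indexed from 0 here (s_0 = s corresponds to s_1 in the paper).\<close>

primrec traj :: "('s \<Rightarrow> 'a \<Rightarrow> 's) \<Rightarrow> 's \<Rightarrow> (nat \<Rightarrow> 'a) \<Rightarrow> nat \<Rightarrow> 's" where
  "traj T s as 0 = s"
| "traj T s as (Suc t) = T (traj T s as t) (as t)"

definition succ_feat ::
  "('s \<Rightarrow> 'a \<Rightarrow> 's) \<Rightarrow> ('s \<Rightarrow> real^'d) \<Rightarrow> real \<Rightarrow> 's \<Rightarrow> (nat \<Rightarrow> 'a) \<Rightarrow> real^'d" where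
  "succ_feat T phi \<gamma> s as = (\<Sum>t. (\<gamma> ^ t) *\<^sub>R phi (traj T s as t))"

definition covered ::
  "('s \<Rightarrow> 'a \<Rightarrow> 's \<Rightarrow> nat) \<Rightarrow> ('s \<Rightarrow> 'a \<Rightarrow> 's) \<Rightarrow> 's \<Rightarrow> (nat \<Rightarrow> 'a) \<Rightarrow> bool" where
  "covered N T s as \<longleftrightarrow> (\<forall>t. N (traj T s as t) (as t) (traj T s as (Suc t)) \<ge> 1)"

text \<open>Support of the DiSPO outcome model p(psi | s): successor features of dataset-covered
trajectories starting at s.\<close>
definition outcome_support ::
  "('s \<Rightarrow> 'a \<Rightarrow> 's \<Rightarrow> nat) \<Rightarrow> ('s \<Rightarrow> 'a \<Rightarrow> 's) \<Rightarrow> ('s \<Rightarrow> real^'d) \<Rightarrow> real \<Rightarrow> 's \<Rightarrow> (real^'d) set" where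
  "outcome_support N T phi \<gamma> s = {succ_feat T phi \<gamma> s as | as. covered N T s as}"

text \<open>a is an action the DiSPO policy may take at s: some psi* maximizing w^T psi over the
support of p(. | s) is realized by a dataset transition (s,a,s'), i.e.
psi* = phi s + gamma psi' with psi' in the support of p(. | s').\<close>
definition dispo_action ::
  "('s \<Rightarrow> 'a \<Rightarrow> 's \<Rightarrow> nat) \<Rightarrow> ('s \<Rightarrow> 'a \<Rightarrow> 's) \<Rightarrow> ('s \<Rightarrow> real^'d) \<Rightarrow> real \<Rightarrow> real^'d \<Rightarrow> 's \<Rightarrow> 'a \<Rightarrow> bool" where
  "dispo_action N T phi \<gamma> w s a \<longleftrightarrow>
     (\<exists>\<psi>\<in>outcome_support N T phi \<gamma> s.
        (\<forall>\<psi>'\<in>outcome_support N T phi \<gamma> s. w \<bullet> \<psi>' \<le> w \<bullet> \<psi>) \<and>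
        (\<exists>s'. N s a s' \<ge> 1 \<and> (\<exists>\<psi>'\<in>outcome_support N T phi \<gamma> s'. \<psi> = phi s + \<gamma> *\<^sub>R \<psi>')))"

definition disc_return ::
  "('s \<Rightarrow> 'a \<Rightarrow> 's) \<Rightarrow> ('s \<Rightarrow> real) \<Rightarrow> real \<Rightarrow> 's \<Rightarrow> (nat \<Rightarrow> 'a) \<Rightarrow> real" where
  "disc_return T r \<gamma> s as = (\<Sum>t. \<gamma> ^ t * r (traj T s as t))"

definition opt_value ::
  "('s \<Rightarrow> 'a \<Rightarrow> 's) \<Rightarrow> ('s \<Rightarrow> real) \<Rightarrow> real \<Rightarrow> 's \<Rightarrow> real" where
  "opt_value T r \<gamma> s = (SUP as. disc_return T r \<gamma> s as)"

end

theory Submission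
  imports Defs
begin

text \<open>When every transition of the MDP occurs in the dataset, the support of the outcome model at
s consists of the successor features of all action sequences from s, and w \<bullet> \<psi> is the
discounted return of the corresponding sequence. So the outcome selected by the DiSPO has value
V(s), and an action realising it is exactly a Bellman-optimal one: V(s) = r(s) + \<gamma> V(T s a).
Such actions exist because there are finitely many. Along a trajectory that is Bellman-optimal at
every step, the gap between V(s) and the return of the trajectory contracts by the factor \<gamma>
per step while staying bounded, hence vanishes.\<close>

lemma traj_Suc_shift: "traj T s as (Suc t) = traj T (T s (as 0)) (\<lambda>t. as (Suc t)) t"
  by (induction t) auto

primrec policy_traj :: "('s \<Rightarrow> 'a \<Rightarrow> 's) \<Rightarrow> ('s \<Rightarrow> 'a) \<Rightarrow> 's \<Rightarrow> nat \<Rightarrow> 's" where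
  "policy_traj T \<pi> s 0 = s"
| "policy_traj T \<pi> s (Suc t) = T (policy_traj T \<pi> s t) (\<pi> (policy_traj T \<pi> s t))"

lemma traj_policy_traj: "traj T s (\<lambda>t. \<pi> (policy_traj T \<pi> s t)) t = policy_traj T \<pi> s t"
  by (induction t) auto

lemma norm_discounted_le:
  fixes f :: "nat \<Rightarrow> 'v::real_normed_vector"
  assumes "\<And>t. norm (f t) \<le> B" "0 \<le> \<gamma>"
  shows "norm (\<gamma> ^ t *\<^sub>R f t) \<le> \<gamma> ^ t * B"
  using mult_left_mono[OF assms(1) zero_le_power[OF assms(2)]] assms(2) by simp

lemma summable_discounted:
  fixes f :: "nat \<Rightarrow> 'v::banach"
  assumes "\<And>t. norm (f t) \<le> B" "0 \<le> \<gamma>" "\<gamma> < 1"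
  shows "summable (\<lambda>t. \<gamma> ^ t *\<^sub>R f t)"
proof (rule summable_comparison_test')
  show "summable (\<lambda>t. \<gamma> ^ t * B)"
    using assms by (intro summable_mult2 summable_geometric) auto
qed (use norm_discounted_le assms in blast)

lemma norm_suminf_discounted_le:
  fixes f :: "nat \<Rightarrow> 'v::banach"
  assumes "\<And>t. norm (f t) \<le> B" "0 \<le> \<gamma>" "\<gamma> < 1"
  shows "norm (\<Sum>t. \<gamma> ^ t *\<^sub>R f t) \<le> B / (1 - \<gamma>)"
proof -
  have geom: "(\<lambda>t. \<gamma> ^ t * B) sums (B / (1 - \<gamma>))"
    using assms sums_mult2[OF geometric_sums, of \<gamma> B] by simp
  have norms: "summable (\<lambda>t. norm (\<gamma> ^ t *\<^sub>R f t))"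
    by (rule summable_comparison_test'[OF sums_summable[OF geom]])
      (use norm_discounted_le[OF assms(1,2)] in simp)
  have "norm (\<Sum>t. \<gamma> ^ t *\<^sub>R f t) \<le> (\<Sum>t. norm (\<gamma> ^ t *\<^sub>R f t))"
    by (rule summable_norm[OF norms])
  also have "\<dots> \<le> (\<Sum>t. \<gamma> ^ t * B)"
    using norm_discounted_le[OF assms(1,2)] by (intro suminf_le norms sums_summable[OF geom])
  also have "\<dots> = B / (1 - \<gamma>)"
    using geom by (rule sums_unique[symmetric])
  finally show ?thesis .
qed

lemma bounded_on_finite:
  fixes h :: "'s::finite \<Rightarrow> 'v::real_normed_vector"
  obtains B where "\<And>x. norm (h x) \<le> B"
  using finite_imp_bounded[of "range h"] by (auto simp: bounded_iff)

lemma finite_maximizer: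
  fixes f :: "'a::finite \<Rightarrow> 'b::linorder"
  obtains a where "\<And>b. f b \<le> f a"
proof -
  have "Max (range f) \<in> range f" by (simp add: finite_imageI)
  then obtain a where "Max (range f) = f a" by blast
  moreover have "f b \<le> Max (range f)" for b by (rule Max_ge) (simp_all add: finite_imageI)
  ultimately show thesis by (intro that[of a]) simp
qed

lemma summable_discounted_traj:
  fixes h :: "'s::finite \<Rightarrow> 'v::banach"
  assumes "0 \<le> \<gamma>" "\<gamma> < 1"
  shows "summable (\<lambda>t. \<gamma> ^ t *\<^sub>R h (traj T s as t))"
proof -
  obtain B where "\<And>x. norm (h x) \<le> B" using bounded_on_finite[of h] by blast
  then show ?thesis using assms by (intro summable_discounted[where B = B])
qed

lemma discounted_traj_unroll:
  fixes h :: "'s::finite \<Rightarrow> 'v::banach"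
  assumes "0 \<le> \<gamma>" "\<gamma> < 1"
  shows "(\<Sum>t. \<gamma> ^ t *\<^sub>R h (traj T s as t)) =
    h s + \<gamma> *\<^sub>R (\<Sum>t. \<gamma> ^ t *\<^sub>R h (traj T (T s (as 0)) (\<lambda>t. as (Suc t)) t))"
proof -
  let ?f = "\<lambda>t. \<gamma> ^ t *\<^sub>R h (traj T s as t)"
  let ?g = "\<lambda>t. \<gamma> ^ t *\<^sub>R h (traj T (T s (as 0)) (\<lambda>t. as (Suc t)) t)"
  have "suminf ?f = (\<Sum>t. ?f (Suc t)) + ?f 0"
    by (simp only: suminf_split_head[OF summable_discounted_traj[OF assms]]) simp
  also have "(\<lambda>t. ?f (Suc t)) = (\<lambda>t. \<gamma> *\<^sub>R ?g t)"
    by (simp add: traj_Suc_shift del: traj.simps)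
  also have "(\<Sum>t. \<gamma> *\<^sub>R ?g t) = \<gamma> *\<^sub>R suminf ?g"
    by (rule suminf_scaleR_right[OF summable_discounted_traj[OF assms], symmetric])
  finally show ?thesis by simp
qed

locale discounted_det_mdp =
  fixes T :: "'s::finite \<Rightarrow> 'a::finite \<Rightarrow> 's"
    and r :: "'s \<Rightarrow> real"
    and \<gamma> :: real
  assumes discount_pos: "0 < \<gamma>" and discount_less_one: "\<gamma> < 1"
begin

lemma discount_nonneg: "0 \<le> \<gamma>"
  using discount_pos by simp

lemma disc_return_unroll:
  "disc_return T r \<gamma> s as = r s + \<gamma> * disc_return T r \<gamma> (T s (as 0)) (\<lambda>t. as (Suc t))"
  using discounted_traj_unroll[OF discount_nonneg discount_less_one, of r T s as]
  by (simp add: disc_return_def)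

lemma disc_return_bounded: obtains M where "\<And>s as. \<bar>disc_return T r \<gamma> s as\<bar> \<le> M"
proof -
  obtain B where "\<And>x. norm (r x) \<le> B" using bounded_on_finite[of r] by blast
  then have "\<bar>disc_return T r \<gamma> s as\<bar> \<le> B / (1 - \<gamma>)" for s as
    using norm_suminf_discounted_le[OF _ discount_nonneg discount_less_one,
        where f = "\<lambda>t. r (traj T s as t)"]
    by (simp add: disc_return_def)
  then show thesis by (rule that[of "B / (1 - \<gamma>)"])
qed

lemma bdd_above_disc_return: "bdd_above (range (disc_return T r \<gamma> s))"
proof -
  obtain M where "\<And>s as. \<bar>disc_return T r \<gamma> s as\<bar> \<le> M" using disc_return_bounded by blast
  then show ?thesis by (intro bdd_aboveI[of _ M]) (auto simp: abs_le_iff)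
qed

lemma disc_return_le_opt_value: "disc_return T r \<gamma> s as \<le> opt_value T r \<gamma> s"
  unfolding opt_value_def by (rule cSUP_upper[OF _ bdd_above_disc_return]) simp

lemma opt_value_le: "(\<And>as. disc_return T r \<gamma> s as \<le> c) \<Longrightarrow> opt_value T r \<gamma> s \<le> c"
  unfolding opt_value_def by (rule cSUP_least) auto

lemma bellman_le_opt_value: "r s + \<gamma> * opt_value T r \<gamma> (T s a) \<le> opt_value T r \<gamma> s"
proof -
  have "\<gamma> * disc_return T r \<gamma> (T s a) as \<le> opt_value T r \<gamma> s - r s" for as
    using disc_return_unroll[of s "case_nat a as"] disc_return_le_opt_value[of s "case_nat a as"]
    by simp
  then have "opt_value T r \<gamma> (T s a) \<le> (opt_value T r \<gamma> s - r s) / \<gamma>"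
    using discount_pos by (intro opt_value_le) (simp add: pos_le_divide_eq mult.commute)
  then show ?thesis
    using discount_pos by (simp add: pos_le_divide_eq mult.commute)
qed

definition optimal_action :: "'s \<Rightarrow> 'a \<Rightarrow> bool" where
  "optimal_action s a \<longleftrightarrow> opt_value T r \<gamma> s = r s + \<gamma> * opt_value T r \<gamma> (T s a)"

lemma exists_optimal_action: "\<exists>a. optimal_action s a"
proof -
  obtain a where a: "\<And>b. opt_value T r \<gamma> (T s b) \<le> opt_value T r \<gamma> (T s a)"
    using finite_maximizer[of "\<lambda>b. opt_value T r \<gamma> (T s b)"] by blast
  have "opt_value T r \<gamma> s \<le> r s + \<gamma> * opt_value T r \<gamma> (T s a)"
  proof (rule opt_value_le)
    fix as
    have "disc_return T r \<gamma> s as = r s + \<gamma> * disc_return T r \<gamma> (T s (as 0)) (\<lambda>t. as (Suc t))"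
      by (rule disc_return_unroll)
    also have "\<dots> \<le> r s + \<gamma> * opt_value T r \<gamma> (T s a)"
      using order_trans[OF disc_return_le_opt_value a] discount_pos
      by (simp add: mult_left_mono)
    finally show "disc_return T r \<gamma> s as \<le> r s + \<gamma> * opt_value T r \<gamma> (T s a)" .
  qed
  then have "optimal_action s a"
    using bellman_le_opt_value[of s a] unfolding optimal_action_def by linarith
  then show ?thesis ..
qed

lemma disc_return_eq_opt_value:
  assumes "\<And>t. optimal_action (traj T s as t) (as t)"
  shows "disc_return T r \<gamma> s as = opt_value T r \<gamma> s"
proof -
  obtain M where M: "\<And>s as. \<bar>disc_return T r \<gamma> s as\<bar> \<le> M"
    using disc_return_bounded by blast
  have gap: "opt_value T r \<gamma> s - disc_return T r \<gamma> s as \<le> \<gamma> ^ n * (2 * M)"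
    if "\<And>t. optimal_action (traj T s as t) (as t)" for n s as
    using that
  proof (induction n arbitrary: s as)
    case 0
    have "opt_value T r \<gamma> s \<le> M"
      using M by (intro opt_value_le) (auto simp: abs_le_iff)
    then show ?case using M[of s as] by (simp add: abs_le_iff)
  next
    case (Suc n)
    let ?s' = "T s (as 0)" and ?as' = "\<lambda>t. as (Suc t)"
    have "optimal_action (traj T ?s' ?as' t) (?as' t)" for t
      using Suc.prems[of "Suc t"] by (simp only: traj_Suc_shift)
    then have "opt_value T r \<gamma> ?s' - disc_return T r \<gamma> ?s' ?as' \<le> \<gamma> ^ n * (2 * M)"
      by (rule Suc.IH)
    moreover have "opt_value T r \<gamma> s - disc_return T r \<gamma> s as =
        \<gamma> * (opt_value T r \<gamma> ?s' - disc_return T r \<gamma> ?s' ?as')"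
      using Suc.prems[of 0] disc_return_unroll[of s as]
      by (simp add: optimal_action_def algebra_simps)
    ultimately show ?case
      using discount_pos by (simp add: mult_left_mono)
  qed
  have "(\<lambda>n. \<gamma> ^ n * (2 * M)) \<longlonglongrightarrow> 0"
    using discount_pos discount_less_one
    by (intro tendsto_mult_left_zero LIMSEQ_power_zero) simp
  then have "opt_value T r \<gamma> s - disc_return T r \<gamma> s as \<le> 0"
    using gap[OF assms] by (intro LIMSEQ_le_const) auto
  then show ?thesis using disc_return_le_opt_value[of s as] by linarith
qed

lemma exists_optimal_trajectory: "\<exists>as. disc_return T r \<gamma> s as = opt_value T r \<gamma> s"
proof -
  define \<pi> where "\<pi> x = (SOME a. optimal_action x a)" for x
  have "optimal_action x (\<pi> x)" for x
    unfolding \<pi>_def using exists_optimal_action by (rule someI_ex)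
  then have "disc_return T r \<gamma> s (\<lambda>t. \<pi> (policy_traj T \<pi> s t)) = opt_value T r \<gamma> s"
    by (intro disc_return_eq_opt_value) (simp only: traj_policy_traj)
  then show ?thesis by blast
qed

end

lemma succ_feat_unroll:
  fixes phi :: "'s::finite \<Rightarrow> real^'d"
  assumes "0 \<le> \<gamma>" "\<gamma> < 1"
  shows "succ_feat T phi \<gamma> s as = phi s + \<gamma> *\<^sub>R succ_feat T phi \<gamma> (T s (as 0)) (\<lambda>t. as (Suc t))"
  unfolding succ_feat_def by (rule discounted_traj_unroll[OF assms])

lemma inner_succ_feat:
  fixes phi :: "'s::finite \<Rightarrow> real^'d"
  assumes "0 \<le> \<gamma>" "\<gamma> < 1"
  shows "w \<bullet> succ_feat T phi \<gamma> s as = disc_return T (\<lambda>x. w \<bullet> phi x) \<gamma> s as"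
  unfolding succ_feat_def disc_return_def
  using bounded_linear.suminf[OF bounded_linear_inner_right summable_discounted_traj[OF assms]]
  by simp

locale dispo_full_coverage = discounted_det_mdp T "\<lambda>x. w \<bullet> phi x" \<gamma>
  for T :: "'s::finite \<Rightarrow> 'a::finite \<Rightarrow> 's" and phi :: "'s \<Rightarrow> real^'d" and w \<gamma> +
  fixes N :: "'s \<Rightarrow> 'a \<Rightarrow> 's \<Rightarrow> nat"
  assumes data_from_mdp: "N s a s' \<ge> 1 \<Longrightarrow> s' = T s a"
    and coverage: "N s a (T s a) \<ge> 1"
begin

lemma outcome_support_eq_range: "outcome_support N T phi \<gamma> s = range (succ_feat T phi \<gamma> s)"
  unfolding outcome_support_def covered_def using coverage by auto

lemmas inner_succ_feat_eq_disc_return = inner_succ_feat[OF discount_nonneg discount_less_one]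

lemma inner_le_opt_value:
  assumes "\<psi> \<in> outcome_support N T phi \<gamma> s"
  shows "w \<bullet> \<psi> \<le> opt_value T (\<lambda>x. w \<bullet> phi x) \<gamma> s"
  using assms disc_return_le_opt_value
  by (auto simp: outcome_support_eq_range inner_succ_feat_eq_disc_return)

lemma outcome_support_maximizer_iff:
  assumes "\<psi> \<in> outcome_support N T phi \<gamma> s"
  shows "(\<forall>\<psi>'\<in>outcome_support N T phi \<gamma> s. w \<bullet> \<psi>' \<le> w \<bullet> \<psi>) \<longleftrightarrow>
    w \<bullet> \<psi> = opt_value T (\<lambda>x. w \<bullet> phi x) \<gamma> s"
proof
  assume "\<forall>\<psi>'\<in>outcome_support N T phi \<gamma> s. w \<bullet> \<psi>' \<le> w \<bullet> \<psi>"
  then have "opt_value T (\<lambda>x. w \<bullet> phi x) \<gamma> s \<le> w \<bullet> \<psi>"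
    by (intro opt_value_le) (auto simp: outcome_support_eq_range inner_succ_feat_eq_disc_return)
  then show "w \<bullet> \<psi> = opt_value T (\<lambda>x. w \<bullet> phi x) \<gamma> s"
    using inner_le_opt_value[OF assms] by linarith
qed (use inner_le_opt_value in auto)

lemma dispo_action_iff_optimal_action:
  "dispo_action N T phi \<gamma> w s a \<longleftrightarrow> optimal_action s a"
proof
  assume "dispo_action N T phi \<gamma> w s a"
  then obtain \<psi> s' \<psi>' where opt: "w \<bullet> \<psi> = opt_value T (\<lambda>x. w \<bullet> phi x) \<gamma> s"
    and "N s a s' \<ge> 1" and \<psi>': "\<psi>' \<in> outcome_support N T phi \<gamma> s'"
    and realised: "\<psi> = phi s + \<gamma> *\<^sub>R \<psi>'"
    unfolding dispo_action_def by (auto simp: outcome_support_maximizer_iff)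
  then have "s' = T s a" by (intro data_from_mdp)
  then have "\<gamma> * (w \<bullet> \<psi>') \<le> \<gamma> * opt_value T (\<lambda>x. w \<bullet> phi x) \<gamma> (T s a)"
    using inner_le_opt_value[OF \<psi>'] discount_pos by (simp add: mult_left_mono)
  then have "opt_value T (\<lambda>x. w \<bullet> phi x) \<gamma> s \<le> w \<bullet> phi s + \<gamma> * opt_value T (\<lambda>x. w \<bullet> phi x) \<gamma> (T s a)"
    using opt realised by (simp add: inner_add_right)
  then show "optimal_action s a"
    unfolding optimal_action_def using bellman_le_opt_value[of s a] by linarith
next
  assume "optimal_action s a"
  obtain as' where as': "disc_return T (\<lambda>x. w \<bullet> phi x) \<gamma> (T s a) as' =
      opt_value T (\<lambda>x. w \<bullet> phi x) \<gamma> (T s a)"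
    using exists_optimal_trajectory by blast
  define \<psi> where "\<psi> = succ_feat T phi \<gamma> s (case_nat a as')"
  define \<psi>' where "\<psi>' = succ_feat T phi \<gamma> (T s a) as'"
  have \<psi>_in: "\<psi> \<in> outcome_support N T phi \<gamma> s" and "\<psi>' \<in> outcome_support N T phi \<gamma> (T s a)"
    by (simp_all add: outcome_support_eq_range \<psi>_def \<psi>'_def)
  have realised: "\<psi> = phi s + \<gamma> *\<^sub>R \<psi>'"
    unfolding \<psi>_def \<psi>'_def
    using succ_feat_unroll[OF discount_nonneg discount_less_one, of T phi s "case_nat a as'"]
    by simp
  have "w \<bullet> \<psi> = opt_value T (\<lambda>x. w \<bullet> phi x) \<gamma> s"
    using disc_return_unroll[of s "case_nat a as'"] as' \<open>optimal_action s a\<close>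
    by (simp add: \<psi>_def inner_succ_feat_eq_disc_return optimal_action_def)
  then have "\<forall>\<psi>''\<in>outcome_support N T phi \<gamma> s. w \<bullet> \<psi>'' \<le> w \<bullet> \<psi>"
    using outcome_support_maximizer_iff[OF \<psi>_in] by simp
  then show "dispo_action N T phi \<gamma> w s a"
    unfolding dispo_action_def using \<psi>_in \<open>\<psi>' \<in> _\<close> realised coverage[of s a] by blast
qed

end

theorem theorem2:
  fixes T :: "'s::finite \<Rightarrow> 'a::finite \<Rightarrow> 's"
    and N :: "'s \<Rightarrow> 'a \<Rightarrow> 's \<Rightarrow> nat"
    and phi :: "'s \<Rightarrow> real^'d"
    and \<gamma> :: real
    and w :: "real^'d"
  assumes "0 < \<gamma>" and "\<gamma> < 1"
    and data_from_mdp: "\<And>s a s'. N s a s' \<ge> 1 \<Longrightarrow> s' = T s a"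
    and coverage: "\<And>s a. N s a (T s a) \<ge> 1"
  shows "(\<forall>s. \<exists>a. dispo_action N T phi \<gamma> w s a)
    \<and> (\<forall>s as. (\<forall>t. dispo_action N T phi \<gamma> w (traj T s as t) (as t)) \<longrightarrow>
         disc_return T (\<lambda>x. w \<bullet> phi x) \<gamma> s as = opt_value T (\<lambda>x. w \<bullet> phi x) \<gamma> s)"
proof -
  interpret dispo_full_coverage T phi w \<gamma> N
    using assms by unfold_locales auto
  show ?thesis
    using exists_optimal_action disc_return_eq_opt_value
    by (simp add: dispo_action_iff_optimal_action)
qed

end
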